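(* Let $G=(S,C,H)$ be a spider graph with weight $r$ (thin with $r\ge2$, or thick with $r\ge3$) and let $T_H$ be an MDNS of $G[H]$. Then $\tilde\gamma_{gr}^{\times 2}(G)=\tilde\gamma_{gr}^{\times 2}(G[C\cup S])+\tilde\gamma_{gr}^{\times 2}(G[H])$. Moreover, if $G$ is thin, $T_H\oplus(c_1,\dots,c_r,s_1,\dots,s_r)$ is an MDNS of $G$, and if $G$ is thick, $T_H\oplus(s_1,\dots,s_r,c_1,c_2)$ is an MDNS of $G$.
   Context: Graphs are finite, simple, undirected; $N[v]$ is the closed neighborhood. A sequence of distinct vertices $(v_1,\dots,v_k)$ is a double neighborhood sequence (DNS) if for each $i$ some $u\in N[v_i]$ satisfies $|\{j<i:u\in N[v_j]\}|\le 1$; an MDNS is a DNS of maximum length and $\tilde\gamma_{gr}^{\times 2}$ is that length. For the graph with no vertices, the MDNS is the empty sequence and $\tilde\gamma_{gr}^{\times 2}=0$. $\oplus$ denotes concatenation of sequences. A spider graph $G=(S,C,H)$: $V(G)$ is partitioned into $S=\{s_1,\dots,s_r\}$ (stable), $C=\{c_1,\dots,c_r\}$ (clique), $H$ (possibly empty, arbitrary edges inside), $r\ge2$, every vertex of $C$ adjacent to every vertex of $H$, no edges between $H$ and $S$; it is thin if $s_i c_j\in E$ iff $i=j$, thick if $s_ic_j\in E$ iff $i\neq j$. $r$ is the weight. *)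

theory Defs
  imports Main
begin

definition graph :: "'a set \<Rightarrow> ('a \<Rightarrow> 'a \<Rightarrow> bool) \<Rightarrow> bool" where
  "graph V E \<longleftrightarrow> finite V \<and> (\<forall>u v. E u v \<longrightarrow> u \<in> V \<and> v \<in> V \<and> u \<noteq> v \<and> E v u)"

definition cnbhd :: "'a set \<Rightarrow> ('a \<Rightarrow> 'a \<Rightarrow> bool) \<Rightarrow> 'a \<Rightarrow> 'a set" where
  "cnbhd X E v = {u \<in> X. u = v \<or> E v u}"

definition is_dns :: "'a set \<Rightarrow> ('a \<Rightarrow> 'a \<Rightarrow> bool) \<Rightarrow> 'a list \<Rightarrow> bool" where
  "is_dns X E vs \<longleftrightarrow> distinct vs \<and> set vs \<subseteq> X \<and>
     (\<forall>i < length vs. \<exists>u \<in> cnbhd X E (vs ! i).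
        card {j. j < i \<and> u \<in> cnbhd X E (vs ! j)} \<le> 1)"

definition is_mdns :: "'a set \<Rightarrow> ('a \<Rightarrow> 'a \<Rightarrow> bool) \<Rightarrow> 'a list \<Rightarrow> bool" where
  "is_mdns X E vs \<longleftrightarrow> is_dns X E vs \<and> (\<forall>ws. is_dns X E ws \<longrightarrow> length ws \<le> length vs)"

definition gamma_dns :: "'a set \<Rightarrow> ('a \<Rightarrow> 'a \<Rightarrow> bool) \<Rightarrow> nat" where
  "gamma_dns X E = Max (length ` {vs. is_dns X E vs})"

definition spider :: "'a set \<Rightarrow> ('a \<Rightarrow> 'a \<Rightarrow> bool) \<Rightarrow> nat \<Rightarrow> (nat \<Rightarrow> 'a) \<Rightarrow> (nat \<Rightarrow> 'a) \<Rightarrow> 'a set \<Rightarrow> bool" where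
  "spider V E r s c H \<longleftrightarrow> graph V E \<and> r \<ge> 2 \<and>
     inj_on s {1..r} \<and> inj_on c {1..r} \<and>
     s ` {1..r} \<inter> c ` {1..r} = {} \<and> s ` {1..r} \<inter> H = {} \<and> c ` {1..r} \<inter> H = {} \<and>
     V = s ` {1..r} \<union> c ` {1..r} \<union> H \<and>
     (\<forall>i\<in>{1..r}. \<forall>j\<in>{1..r}. \<not> E (s i) (s j)) \<and>
     (\<forall>i\<in>{1..r}. \<forall>j\<in>{1..r}. i \<noteq> j \<longrightarrow> E (c i) (c j)) \<and>
     (\<forall>i\<in>{1..r}. \<forall>h\<in>H. E (c i) h) \<and>
     (\<forall>i\<in>{1..r}. \<forall>h\<in>H. \<not> E (s i) h)"

definition thin_spider where
  "thin_spider V E r s c H \<longleftrightarrow> spider V E r s c H \<and>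
     (\<forall>i\<in>{1..r}. \<forall>j\<in>{1..r}. E (s i) (c j) \<longleftrightarrow> i = j)"

definition thick_spider where
  "thick_spider V E r s c H \<longleftrightarrow> spider V E r s c H \<and>
     (\<forall>i\<in>{1..r}. \<forall>j\<in>{1..r}. E (s i) (c j) \<longleftrightarrow> i \<noteq> j)"

end

theory Submission
  imports Defs
begin

(* Restricting a DNS of G to H gives a DNS of G[H]: every vertex of C is adjacent to all of H,
   so an H-vertex witnessed by some c in C is preceded by at most one H-vertex and can witness
   itself inside G[H]. Hence a DNS of G has at most gamma(G[H]) vertices in H, and it remains to
   bound its vertices in S \<union> C: by 2r in the thin case, and by r + 2 in the thick case, since
   once two clique vertices are chosen a third one can only be witnessed by some s_j, which is
   then dominated twice and can never be chosen itself. Both bounds are attained by the given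
   sequences, in which every new vertex has a witness dominated by no other new vertex. *)

definition dom_count :: "'a set \<Rightarrow> ('a \<Rightarrow> 'a \<Rightarrow> bool) \<Rightarrow> 'a list \<Rightarrow> 'a \<Rightarrow> nat" where
  "dom_count X E P u = card {w \<in> set P. u \<in> cnbhd X E w}"

definition dns_admissible :: "'a set \<Rightarrow> ('a \<Rightarrow> 'a \<Rightarrow> bool) \<Rightarrow> 'a list \<Rightarrow> 'a \<Rightarrow> bool" where
  "dns_admissible X E P v \<longleftrightarrow> (\<exists>u \<in> cnbhd X E v. dom_count X E P u \<le> 1)"

lemma card_nth_indices_eq_card_take:
  assumes "distinct vs" "i \<le> length vs"
  shows "card {j. j < i \<and> Q (vs ! j)} = card {w \<in> set (take i vs). Q w}"
proof -
  have "{w \<in> set (take i vs). Q w} = (!) vs ` {j. j < i \<and> Q (vs ! j)}"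
    using assms(2) by (auto simp: in_set_conv_nth nth_take)
  moreover have "inj_on ((!) vs) {j. j < i \<and> Q (vs ! j)}"
    by (rule inj_on_nth) (use assms in auto)
  ultimately show ?thesis by (simp add: card_image)
qed

lemma is_dns_iff_admissible:
  "is_dns X E vs \<longleftrightarrow>
     distinct vs \<and> set vs \<subseteq> X \<and> (\<forall>i < length vs. dns_admissible X E (take i vs) (vs ! i))"
proof (cases "distinct vs")
  case True
  then have "card {j. j < i \<and> u \<in> cnbhd X E (vs ! j)} = dom_count X E (take i vs) u"
    if "i < length vs" for i u
    using card_nth_indices_eq_card_take[OF True, of i] that unfolding dom_count_def by simp
  then show ?thesis unfolding is_dns_def dns_admissible_def by auto
qed (simp add: is_dns_def)

lemma is_dns_Nil [simp]: "is_dns X E []"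
  by (simp add: is_dns_def)

lemma is_dns_snoc:
  "is_dns X E (P @ [v]) \<longleftrightarrow> is_dns X E P \<and> v \<notin> set P \<and> v \<in> X \<and> dns_admissible X E P v"
  unfolding is_dns_iff_admissible by (auto simp: nth_append less_Suc_eq)

lemma is_dns_append_Cons_imp_admissible:
  assumes "is_dns X E (P @ v # Q)"
  shows "dns_admissible X E P v"
proof -
  have "length P < length (P @ v # Q)" by simp
  then show ?thesis using assms unfolding is_dns_iff_admissible by fastforce
qed

lemma card_le_dom_count:
  assumes "A \<subseteq> set P" "\<forall>w \<in> A. u \<in> cnbhd X E w"
  shows "card A \<le> dom_count X E P u"
  unfolding dom_count_def by (rule card_mono) (use assms in auto)

lemma dom_count_le_1_if_unique:
  assumes "\<And>w. w \<in> set P \<Longrightarrow> u \<in> cnbhd X E w \<Longrightarrow> w = a"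
  shows "dom_count X E P u \<le> 1"
proof -
  have "dom_count X E P u \<le> card {a}"
    unfolding dom_count_def by (rule card_mono) (use assms in auto)
  then show ?thesis by simp
qed

lemma not_admissible_if_doubly_dominated:
  assumes "a \<in> set P" "b \<in> set P" "a \<noteq> b"
    and "\<And>u. u \<in> cnbhd X E v \<Longrightarrow> u \<in> cnbhd X E a \<and> u \<in> cnbhd X E b"
  shows "\<not> dns_admissible X E P v"
proof
  assume "dns_admissible X E P v"
  then obtain u where "u \<in> cnbhd X E v" "dom_count X E P u \<le> 1"
    unfolding dns_admissible_def by blast
  moreover have "card {a, b} \<le> dom_count X E P u" if "u \<in> cnbhd X E v" for u
    by (rule card_le_dom_count) (use assms that in auto)
  ultimately show False using \<open>a \<noteq> b\<close> by fastforce
qed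

lemma is_mdns_imp_gamma_dns:
  assumes "is_mdns X E vs"
  shows "gamma_dns X E = length vs"
proof -
  have "finite (length ` {vs. is_dns X E vs})"
    by (rule finite_subset[of _ "{..length vs}"]) (use assms in \<open>auto simp: is_mdns_def\<close>)
  then show ?thesis unfolding gamma_dns_def
    by (rule Max_eqI) (use assms in \<open>auto simp: is_mdns_def\<close>)
qed

lemma is_mdns_empty: "is_mdns {} E []"
  unfolding is_mdns_def is_dns_def by auto

lemma is_dns_induced_subgraph:
  assumes "H \<subseteq> X" "is_dns H E T"
  shows "is_dns X E T"
  unfolding is_dns_iff_admissible
proof (intro conjI allI impI)
  show "distinct T" "set T \<subseteq> X"
    using assms unfolding is_dns_iff_admissible by auto
  fix i assume "i < length T"
  then obtain u where u: "u \<in> cnbhd H E (T ! i)" "dom_count H E (take i T) u \<le> 1"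
    using assms(2) unfolding is_dns_iff_admissible dns_admissible_def by blast
  have "u \<in> cnbhd X E w \<longleftrightarrow> u \<in> cnbhd H E w" for w
    using u(1) assms(1) by (auto simp: cnbhd_def)
  then have "dom_count X E (take i T) u = dom_count H E (take i T) u"
    by (simp add: dom_count_def)
  moreover have "u \<in> cnbhd X E (T ! i)"
    using u(1) assms(1) by (auto simp: cnbhd_def)
  ultimately show "dns_admissible X E (take i T) (T ! i)"
    using u(2) unfolding dns_admissible_def by (intro bexI[of _ u]) auto
qed

lemma is_dns_filter_induced_subgraph:
  assumes "H \<subseteq> X"
    and outer_nbrs: "\<And>v u w. v \<in> H \<Longrightarrow> u \<in> cnbhd X E v \<Longrightarrow> u \<notin> H \<Longrightarrow> w \<in> H \<Longrightarrow>
      u \<in> cnbhd X E w"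
  shows "is_dns X E W \<Longrightarrow> is_dns H E (filter (\<lambda>x. x \<in> H) W)"
proof (induction W rule: rev_induct)
  case (snoc v W)
  let ?WH = "filter (\<lambda>x. x \<in> H) W"
  from snoc.prems have "is_dns X E W" "v \<notin> set W" "dns_admissible X E W v"
    by (auto simp: is_dns_snoc)
  with snoc.IH have IH: "is_dns H E ?WH" by blast
  have "dns_admissible H E ?WH v" if "v \<in> H"
  proof -
    obtain u where u: "u \<in> cnbhd X E v" "dom_count X E W u \<le> 1"
      using \<open>dns_admissible X E W v\<close> unfolding dns_admissible_def by blast
    show ?thesis
    proof (cases "u \<in> H")
      case True
      have "dom_count H E ?WH u \<le> dom_count X E W u"
        unfolding dom_count_def
        by (rule card_mono) (use True assms(1) in \<open>auto simp: cnbhd_def\<close>)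
      moreover have "u \<in> cnbhd H E v"
        using True u(1) by (simp add: cnbhd_def)
      ultimately show ?thesis
        using u(2) unfolding dns_admissible_def by (intro bexI[of _ u]) auto
    next
      case False
      \<comment> \<open>every vertex of H dominates u, so at most one vertex of H precedes v\<close>
      have "card (set ?WH) \<le> dom_count X E W u"
        by (rule card_le_dom_count) (use outer_nbrs[OF that u(1) False] in auto)
      moreover have "dom_count H E ?WH v \<le> card (set ?WH)"
        unfolding dom_count_def by (rule card_mono) auto
      moreover have "v \<in> cnbhd H E v"
        using that by (simp add: cnbhd_def)
      ultimately show ?thesis
        using u(2) unfolding dns_admissible_def by (intro bexI[of _ v]) auto
    qed
  qed
  then show ?case
    using IH \<open>v \<notin> set W\<close> by (simp add: is_dns_snoc)
qed simp

lemma is_dns_append_private_witnesses: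
  assumes "is_dns X E P" "distinct Q" "set Q \<subseteq> X" "set P \<inter> set Q = {}"
    and "\<And>v. v \<in> set Q \<Longrightarrow> \<exists>u \<in> cnbhd X E v. dom_count X E P u \<le> 1 \<and>
      (\<forall>w \<in> set Q. u \<in> cnbhd X E w \<longrightarrow> w = v)"
  shows "is_dns X E (P @ Q)"
  using assms(2-5)
proof (induction Q rule: rev_induct)
  case (snoc v Q)
  obtain u where u: "u \<in> cnbhd X E v" "dom_count X E P u \<le> 1"
    and u_private: "\<forall>w \<in> set (Q @ [v]). u \<in> cnbhd X E w \<longrightarrow> w = v"
    using snoc.prems(4) by auto
  have "{w \<in> set (P @ Q). u \<in> cnbhd X E w} = {w \<in> set P. u \<in> cnbhd X E w}"
    using u_private snoc.prems(1) by auto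
  then have "dom_count X E (P @ Q) u \<le> 1"
    using u(2) by (simp add: dom_count_def)
  then have "dns_admissible X E (P @ Q) v"
    using u(1) unfolding dns_admissible_def by blast
  moreover have "is_dns X E (P @ Q)"
  proof (rule snoc.IH)
    fix v' assume "v' \<in> set Q"
    then obtain u' where "u' \<in> cnbhd X E v'" "dom_count X E P u' \<le> 1"
      "\<forall>w \<in> set (Q @ [v]). u' \<in> cnbhd X E w \<longrightarrow> w = v'"
      using snoc.prems(4)[of v'] by auto
    then show "\<exists>u \<in> cnbhd X E v'. dom_count X E P u \<le> 1 \<and>
      (\<forall>w \<in> set Q. u \<in> cnbhd X E w \<longrightarrow> w = v')"
      by auto
  qed (use snoc.prems in auto)
  ultimately have "is_dns X E ((P @ Q) @ [v])"
    using snoc.prems(1-3) unfolding is_dns_snoc by auto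
  then show ?case by simp
qed (simp add: assms(1))

lemma length_dns_le_mdns_add_card_diff:
  assumes "H \<subseteq> X"
    and "\<And>v u w. v \<in> H \<Longrightarrow> u \<in> cnbhd X E v \<Longrightarrow> u \<notin> H \<Longrightarrow> w \<in> H \<Longrightarrow>
      u \<in> cnbhd X E w"
    and "is_dns X E W" "is_mdns H E TH"
  shows "length W \<le> length TH + card (set W - H)"
proof -
  have "distinct W"
    using assms(3) by (simp add: is_dns_def)
  have "length (filter (\<lambda>x. x \<in> H) W) \<le> length TH"
    using is_dns_filter_induced_subgraph[OF assms(1,2,3)] assms(4) by (simp add: is_mdns_def)
  moreover have "length (filter (\<lambda>x. x \<in> H) W) = card (set W \<inter> H)"
    using \<open>distinct W\<close> distinct_card[of "filter (\<lambda>x. x \<in> H) W"] by (simp add: Int_def conj_commute)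
  moreover have "length W = card (set W \<inter> H) + card (set W - H)"
    using \<open>distinct W\<close> distinct_card[of W] card_Int_Diff[of "set W" H] by simp
  ultimately show ?thesis by simp
qed

lemma set_upt_1: "set [1..<n+1] = {1..n}"
  by auto

lemma set_map_upt: "set (map f [1..<n+1]) = f ` {1..n}"
  by (simp only: set_map set_upt_1)

lemma distinct_map_upt: "inj_on f {1..n} \<Longrightarrow> distinct (map f [1..<n+1])"
  by (simp only: distinct_map distinct_upt set_upt_1 simp_thms)

(* Unlike spider, this does not require the edges of E to stay inside X, so it also describes
   G[C \<union> S] as the case H = {} of the same graph. *)
locale spider_structure =
  fixes X :: "'a set" and E :: "'a \<Rightarrow> 'a \<Rightarrow> bool" and r :: nat
    and s c :: "nat \<Rightarrow> 'a" and H :: "'a set"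
  assumes E_sym: "\<And>u v. E u v \<Longrightarrow> E v u"
    and two_le_r: "2 \<le> r"
    and inj_s: "inj_on s {1..r}" and inj_c: "inj_on c {1..r}"
    and S_C_disjoint: "s ` {1..r} \<inter> c ` {1..r} = {}"
    and S_H_disjoint: "s ` {1..r} \<inter> H = {}"
    and C_H_disjoint: "c ` {1..r} \<inter> H = {}"
    and X_eq: "X = s ` {1..r} \<union> c ` {1..r} \<union> H"
    and S_stable: "\<And>i j. i \<in> {1..r} \<Longrightarrow> j \<in> {1..r} \<Longrightarrow> \<not> E (s i) (s j)"
    and C_clique: "\<And>i j. i \<in> {1..r} \<Longrightarrow> j \<in> {1..r} \<Longrightarrow> i \<noteq> j \<Longrightarrow> E (c i) (c j)"
    and C_H_complete: "\<And>i h. i \<in> {1..r} \<Longrightarrow> h \<in> H \<Longrightarrow> E (c i) h"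
    and S_H_anticomplete: "\<And>i h. i \<in> {1..r} \<Longrightarrow> h \<in> H \<Longrightarrow> \<not> E (s i) h"
begin

abbreviation S :: "'a set" where "S \<equiv> s ` {1..r}"
abbreviation C :: "'a set" where "C \<equiv> c ` {1..r}"

lemma C_in_cnbhd: "u \<in> C \<Longrightarrow> w \<in> C \<union> H \<Longrightarrow> u \<in> cnbhd X E w"
  using C_clique C_H_complete E_sym unfolding cnbhd_def X_eq by blast

lemma H_in_cnbhd_C: "u \<in> H \<Longrightarrow> w \<in> C \<Longrightarrow> u \<in> cnbhd X E w"
  using C_H_complete unfolding cnbhd_def X_eq by blast

lemma cnbhd_H_subset: "v \<in> H \<Longrightarrow> cnbhd X E v \<subseteq> H \<union> C"
  using S_H_anticomplete E_sym unfolding cnbhd_def X_eq by blast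

lemma cnbhd_s_subset: "j \<in> {1..r} \<Longrightarrow> cnbhd X E (s j) \<subseteq> insert (s j) C"
  using S_stable S_H_anticomplete E_sym unfolding cnbhd_def X_eq by blast

lemma s_in_cnbhd_s_iff: "i \<in> {1..r} \<Longrightarrow> j \<in> {1..r} \<Longrightarrow> s j \<in> cnbhd X E (s i) \<longleftrightarrow> i = j"
  using S_stable inj_onD[OF inj_s] unfolding cnbhd_def X_eq by blast

lemma s_notin_cnbhd_H: "j \<in> {1..r} \<Longrightarrow> h \<in> H \<Longrightarrow> s j \<notin> cnbhd X E h"
  using S_H_anticomplete S_H_disjoint E_sym unfolding cnbhd_def by blast

lemma length_dns_le_mdns_H:
  assumes "is_dns X E W" "is_mdns H E TH"
  shows "length W \<le> length TH + card (set W - H)"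
proof (rule length_dns_le_mdns_add_card_diff[OF _ _ assms])
  show "H \<subseteq> X" by (simp add: X_eq)
  fix v u w assume "v \<in> H" "u \<in> cnbhd X E v" "u \<notin> H" "w \<in> H"
  then show "u \<in> cnbhd X E w"
    using cnbhd_H_subset C_in_cnbhd by blast
qed

lemma set_dns_diff_H_subset: "is_dns X E W \<Longrightarrow> set W - H \<subseteq> S \<union> C"
  unfolding is_dns_def X_eq by blast

lemma card_S: "card S = r" and card_C: "card C = r"
  using card_image[OF inj_s] card_image[OF inj_c] by simp_all

lemma is_dns_append_S:
  assumes "is_dns X E P" "set P \<subseteq> H \<union> C"
    and "\<And>j. j \<in> {1..r} \<Longrightarrow> dom_count X E P (s j) \<le> 1"
  shows "is_dns X E (P @ map s [1..<r+1])"
proof (rule is_dns_append_private_witnesses[OF assms(1)])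
  show "distinct (map s [1..<r+1])" by (rule distinct_map_upt[OF inj_s])
  show "set (map s [1..<r+1]) \<subseteq> X" "set P \<inter> set (map s [1..<r+1]) = {}"
    using assms(2) S_C_disjoint S_H_disjoint unfolding set_map_upt X_eq by blast+
  fix v assume "v \<in> set (map s [1..<r+1])"
  then obtain j where j: "j \<in> {1..r}" "v = s j" unfolding set_map_upt by blast
  then show "\<exists>u \<in> cnbhd X E v. dom_count X E P u \<le> 1 \<and>
      (\<forall>w \<in> set (map s [1..<r+1]). u \<in> cnbhd X E w \<longrightarrow> w = v)"
    using assms(3)[OF j(1)] s_in_cnbhd_s_iff[OF j(1)] s_in_cnbhd_s_iff[of _ j] j
    unfolding set_map_upt by (intro bexI[of _ "s j"]) auto
qed

end

locale thin_spider_structure = spider_structure +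
  assumes thin: "\<And>i j. i \<in> {1..r} \<Longrightarrow> j \<in> {1..r} \<Longrightarrow> E (s i) (c j) \<longleftrightarrow> i = j"
begin

lemma thin_s_in_cnbhd_c_iff:
  "i \<in> {1..r} \<Longrightarrow> j \<in> {1..r} \<Longrightarrow> s j \<in> cnbhd X E (c i) \<longleftrightarrow> i = j"
  using thin E_sym S_C_disjoint unfolding cnbhd_def X_eq by blast

lemma thin_is_dns:
  assumes "is_dns H E TH"
  shows "is_dns X E (TH @ map c [1..<r+1] @ map s [1..<r+1])"
proof -
  have TH_H: "set TH \<subseteq> H"
    using assms by (simp add: is_dns_def)
  have TH_C: "is_dns X E (TH @ map c [1..<r+1])"
  proof (rule is_dns_append_private_witnesses)
    show "is_dns X E TH"
      by (rule is_dns_induced_subgraph[OF _ assms]) (simp add: X_eq)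
    show "distinct (map c [1..<r+1])"
      by (rule distinct_map_upt[OF inj_c])
    show "set (map c [1..<r+1]) \<subseteq> X" "set TH \<inter> set (map c [1..<r+1]) = {}"
      using TH_H C_H_disjoint unfolding set_map_upt X_eq by blast+
    fix v assume "v \<in> set (map c [1..<r+1])"
    then obtain i where i: "i \<in> {1..r}" "v = c i"
      unfolding set_map_upt by blast
    have "dom_count X E TH (s i) \<le> 1"
      using TH_H s_notin_cnbhd_H[OF i(1)] by (intro dom_count_le_1_if_unique) blast
    moreover have "s i \<in> cnbhd X E (c i)"
      using thin_s_in_cnbhd_c_iff[OF i(1) i(1)] by simp
    moreover have "\<forall>w \<in> set (map c [1..<r+1]). s i \<in> cnbhd X E w \<longrightarrow> w = c i"
      using thin_s_in_cnbhd_c_iff[OF _ i(1)] unfolding set_map_upt by blast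
    ultimately show "\<exists>u \<in> cnbhd X E v. dom_count X E TH u \<le> 1 \<and>
        (\<forall>w \<in> set (map c [1..<r+1]). u \<in> cnbhd X E w \<longrightarrow> w = v)"
      using i(2) by blast
  qed
  have "is_dns X E ((TH @ map c [1..<r+1]) @ map s [1..<r+1])"
  proof (rule is_dns_append_S[OF TH_C])
    show "set (TH @ map c [1..<r+1]) \<subseteq> H \<union> C"
      using TH_H unfolding set_append set_map_upt by blast
    fix j assume j: "j \<in> {1..r}"
    show "dom_count X E (TH @ map c [1..<r+1]) (s j) \<le> 1"
    proof (rule dom_count_le_1_if_unique[where a = "c j"])
      fix w assume "w \<in> set (TH @ map c [1..<r+1])" "s j \<in> cnbhd X E w"
      then show "w = c j"
        using TH_H s_notin_cnbhd_H[OF j] thin_s_in_cnbhd_c_iff[OF _ j]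
        unfolding set_append set_map_upt by blast
    qed
  qed
  then show ?thesis by simp
qed

lemma thin_is_mdns:
  assumes "is_mdns H E TH"
  shows "is_mdns X E (TH @ map c [1..<r+1] @ map s [1..<r+1])"
  unfolding is_mdns_def
proof (intro conjI allI impI)
  show "is_dns X E (TH @ map c [1..<r+1] @ map s [1..<r+1])"
    using thin_is_dns assms unfolding is_mdns_def by blast
  fix W assume "is_dns X E W"
  have "card (set W - H) \<le> card (S \<union> C)"
    using set_dns_diff_H_subset[OF \<open>is_dns X E W\<close>] by (intro card_mono) auto
  also have "\<dots> \<le> r + r"
    using card_Un_le[of S C] by (simp only: card_S card_C)
  finally show "length W \<le> length (TH @ map c [1..<r+1] @ map s [1..<r+1])"
    using length_dns_le_mdns_H[OF \<open>is_dns X E W\<close> assms]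
    by (simp only: length_append length_map length_upt)
qed

end

locale thick_spider_structure = spider_structure +
  assumes thick: "\<And>i j. i \<in> {1..r} \<Longrightarrow> j \<in> {1..r} \<Longrightarrow> E (s i) (c j) \<longleftrightarrow> i \<noteq> j"
begin

lemma thick_s_in_cnbhd_c_iff:
  assumes "i \<in> {1..r}" "j \<in> {1..r}"
  shows "s j \<in> cnbhd X E (c i) \<longleftrightarrow> i \<noteq> j"
proof -
  have "s j \<noteq> c i" "s j \<in> X"
    using S_C_disjoint assms unfolding X_eq by blast+
  moreover have "E (c i) (s j) \<longleftrightarrow> E (s j) (c i)"
    using E_sym by blast
  ultimately show ?thesis
    using thick[OF assms(2,1)] unfolding cnbhd_def by auto
qed

lemma thick_cnbhd_s_subset_cnbhd_c:
  assumes "i \<in> {1..r}" "j \<in> {1..r}" "i \<noteq> j"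
  shows "cnbhd X E (s j) \<subseteq> cnbhd X E (c i)"
proof
  fix u assume "u \<in> cnbhd X E (s j)"
  then consider "u = s j" | "u \<in> C"
    using cnbhd_s_subset[OF assms(2)] by blast
  then show "u \<in> cnbhd X E (c i)"
  proof cases
    case 1
    then show ?thesis using thick_s_in_cnbhd_c_iff[OF assms(1,2)] assms(3) by simp
  next
    case 2
    then show ?thesis using C_in_cnbhd assms(1) by blast
  qed
qed

lemma thick_is_dns:
  assumes "is_dns H E TH"
  shows "is_dns X E (TH @ map s [1..<r+1] @ [c 1, c 2])"
proof -
  let ?P = "TH @ map s [1..<r+1]"
  have TH_H: "set TH \<subseteq> H"
    using assms by (simp add: is_dns_def)
  have P: "is_dns X E ?P"
  proof (rule is_dns_append_S)
    show "is_dns X E TH"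
      by (rule is_dns_induced_subgraph[OF _ assms]) (simp add: X_eq)
    show "set TH \<subseteq> H \<union> C"
      using TH_H by blast
    fix j assume j: "j \<in> {1..r}"
    show "dom_count X E TH (s j) \<le> 1"
      using TH_H s_notin_cnbhd_H[OF j] by (intro dom_count_le_1_if_unique) blast
  qed
  have one_two: "1 \<in> {1..r}" "2 \<in> {1..r}"
    using two_le_r by auto
  \<comment> \<open>c i is witnessed by s j, which c j does not dominate\<close>
  have witness: "\<exists>u \<in> cnbhd X E (c i). dom_count X E ?P u \<le> 1 \<and>
      (\<forall>w \<in> {c i, c j}. u \<in> cnbhd X E w \<longrightarrow> w = c i)"
    if "i \<in> {1..r}" "j \<in> {1..r}" "i \<noteq> j" for i j
  proof (intro bexI conjI)
    show "s j \<in> cnbhd X E (c i)"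
      using thick_s_in_cnbhd_c_iff that by blast
    show "dom_count X E ?P (s j) \<le> 1"
    proof (rule dom_count_le_1_if_unique[where a = "s j"])
      fix w assume "w \<in> set ?P" "s j \<in> cnbhd X E w"
      then show "w = s j"
        using TH_H s_notin_cnbhd_H[OF that(2)] s_in_cnbhd_s_iff[OF _ that(2)]
        unfolding set_append set_map_upt by blast
    qed
    show "\<forall>w \<in> {c i, c j}. s j \<in> cnbhd X E w \<longrightarrow> w = c i"
      using thick_s_in_cnbhd_c_iff[OF that(2,2)] by blast
  qed
  have "is_dns X E (?P @ [c 1, c 2])"
  proof (rule is_dns_append_private_witnesses[OF P])
    show "distinct [c 1, c 2]"
      using inj_onD[OF inj_c _ one_two] by auto
    show "set [c 1, c 2] \<subseteq> X"
      using one_two X_eq by auto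
    have "c i \<notin> set ?P" if "i \<in> {1..r}" for i
      using TH_H C_H_disjoint S_C_disjoint that unfolding set_append set_map_upt by blast
    then show "set ?P \<inter> set [c 1, c 2] = {}"
      using one_two unfolding list.set by blast
    fix v assume "v \<in> set [c 1, c 2]"
    then consider "v = c 1" | "v = c 2"
      by auto
    then show "\<exists>u \<in> cnbhd X E v. dom_count X E ?P u \<le> 1 \<and>
        (\<forall>w \<in> set [c 1, c 2]. u \<in> cnbhd X E w \<longrightarrow> w = v)"
    proof cases
      case 1
      then show ?thesis
        using witness[OF one_two] by simp
    next
      case 2
      then show ?thesis
        using witness[OF one_two(2,1)] by (simp add: insert_commute)
    qed
  qed
  then show ?thesis by (simp only: append_assoc)
qed

lemma thick_admissible_after_two_clique_vertices:
  assumes "dns_admissible X E P v" "v \<in> C" "2 \<le> card (set P \<inter> C)"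
  obtains j k where "j \<in> {1..r}" "k \<in> {1..r}" "j \<noteq> k" "set P \<inter> C = {c j, c k}"
    "v \<noteq> c j" "s j \<notin> set P"
proof -
  obtain u where u: "u \<in> cnbhd X E v" "dom_count X E P u \<le> 1"
    using assms(1) unfolding dns_admissible_def by blast
  have "u \<notin> C \<union> H"
  proof
    assume "u \<in> C \<union> H"
    then have "card (set P \<inter> C) \<le> dom_count X E P u"
      using C_in_cnbhd H_in_cnbhd_C by (intro card_le_dom_count) auto
    then show False
      using u(2) assms(3) by simp
  qed
  then obtain j where j: "j \<in> {1..r}" "u = s j"
    using u(1) unfolding cnbhd_def X_eq by blast
  have "v \<noteq> c j"
    using u(1) j(2) thick_s_in_cnbhd_c_iff[OF j(1) j(1)] by blast
  define A where "A = set P \<inter> C - {c j}"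
  have A_dom: "\<forall>w \<in> A. s j \<in> cnbhd X E w"
    using thick_s_in_cnbhd_c_iff[OF _ j(1)] unfolding A_def by blast
  have "card A \<le> dom_count X E P (s j)"
    by (rule card_le_dom_count) (use A_dom in \<open>auto simp: A_def\<close>)
  then have "card A \<le> 1"
    using u(2) j(2) by simp
  have "finite A"
    by (simp add: A_def)
  have "card (set P \<inter> C) \<le> card (insert (c j) A)"
    by (rule card_mono) (auto simp: A_def)
  also have "\<dots> \<le> Suc (card A)"
    using \<open>finite A\<close> by (simp add: card_insert_if)
  finally have "card A = 1"
    using \<open>card A \<le> 1\<close> assms(3) by linarith
  have "c j \<in> set P"
  proof (rule ccontr)
    assume "c j \<notin> set P"
    then have "A = set P \<inter> C"
      by (auto simp: A_def)
    then show False
      using \<open>card A = 1\<close> assms(3) by simp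
  qed
  obtain x where A: "A = {x}"
    using card_1_singletonE[OF \<open>card A = 1\<close>] by blast
  then have "x \<in> C" "x \<noteq> c j"
    unfolding A_def by auto
  then obtain k where k: "k \<in> {1..r}" "x = c k" "c k \<noteq> c j"
    by blast
  have "s j \<notin> set P"
  proof
    assume "s j \<in> set P"
    then have "card {s j, c k} \<le> dom_count X E P (s j)"
      using A_dom A k(2) s_in_cnbhd_s_iff[OF j(1) j(1)] unfolding A_def
      by (intro card_le_dom_count) auto
    moreover have "s j \<noteq> c k"
      using S_C_disjoint j(1) k(1) by blast
    ultimately show False
      using u(2) j(2) by simp
  qed
  moreover have "set P \<inter> C = insert (c j) A"
    using \<open>c j \<in> set P\<close> j(1) by (auto simp: A_def)
  moreover have "j \<noteq> k"
    using k(3) by blast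
  ultimately show ?thesis
    using that[OF j(1) k(1)] \<open>v \<noteq> c j\<close> A k(2) by simp
qed

lemma thick_dns_three_clique_vertices:
  assumes "is_dns X E W" "2 < card (set W \<inter> C)"
  shows "card (set W \<inter> C) = 3 \<and> (\<exists>j \<in> {1..r}. s j \<notin> set W)"
proof -
  have "\<exists>x \<in> set W. x \<in> C"
    using assms(2) by (metis card.empty disjoint_iff_not_equal not_less_zero)
  then obtain P v Q where W: "W = P @ v # Q" "v \<in> C" "\<forall>y \<in> set Q. y \<notin> C"
    using split_list_last_prop[of W "\<lambda>x. x \<in> C"] by blast
  have "distinct W"
    using assms(1) by (simp add: is_dns_def)
  have WC: "set W \<inter> C = insert v (set P \<inter> C)"
    using W by auto
  moreover have "v \<notin> set P"
    using \<open>distinct W\<close> W(1) by simp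
  ultimately have "2 \<le> card (set P \<inter> C)"
    using assms(2) by simp
  then obtain j k where jk: "j \<in> {1..r}" "k \<in> {1..r}" "j \<noteq> k" "set P \<inter> C = {c j, c k}"
    "v \<noteq> c j" "s j \<notin> set P"
    using thick_admissible_after_two_clique_vertices W(2)
      is_dns_append_Cons_imp_admissible[OF assms(1)[unfolded W(1)]] by metis
  have "v \<noteq> c k"
    using \<open>v \<notin> set P\<close> jk(4) by blast
  have "c j \<noteq> c k"
    using inj_onD[OF inj_c _ jk(1,2)] jk(3) by blast
  have "card (set W \<inter> C) = 3"
    using WC jk(4) \<open>v \<noteq> c j\<close> \<open>v \<noteq> c k\<close> \<open>c j \<noteq> c k\<close> by simp
  \<comment> \<open>after v, the vertex s j and all its neighbours are dominated by both v and c k\<close>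
  have "s j \<notin> set Q"
  proof
    assume "s j \<in> set Q"
    then obtain Q1 Q2 where "Q = Q1 @ s j # Q2"
      by (meson split_list)
    then have "dns_admissible X E (P @ v # Q1) (s j)"
      using assms(1) W(1) is_dns_append_Cons_imp_admissible[of X E "P @ v # Q1" "s j" Q2] by simp
    moreover obtain i where "i \<in> {1..r}" "v = c i" "i \<noteq> j"
      using W(2) \<open>v \<noteq> c j\<close> by blast
    then have "\<And>u. u \<in> cnbhd X E (s j) \<Longrightarrow> u \<in> cnbhd X E (c k) \<and> u \<in> cnbhd X E v"
      using thick_cnbhd_s_subset_cnbhd_c jk(1-3) by blast
    then have "\<not> dns_admissible X E (P @ v # Q1) (s j)"
      using jk(4) \<open>v \<noteq> c k\<close>
      by (intro not_admissible_if_doubly_dominated[where a = "c k" and b = v]) auto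
    ultimately show False
      by contradiction
  qed
  moreover have "s j \<noteq> v"
    using W(2) jk(1) S_C_disjoint by blast
  ultimately show ?thesis
    using \<open>card (set W \<inter> C) = 3\<close> jk(1,6) W(1) by auto
qed

lemma thick_card_set_dns_diff_H_le:
  assumes "is_dns X E W"
  shows "card (set W - H) \<le> r + 2"
proof -
  have "card (set W - H) \<le> card (set W \<inter> S \<union> set W \<inter> C)"
    using set_dns_diff_H_subset[OF assms] by (intro card_mono) auto
  also have "\<dots> \<le> card (set W \<inter> S) + card (set W \<inter> C)"
    by (rule card_Un_le)
  also have "\<dots> \<le> r + 2"
  proof (cases "card (set W \<inter> C) \<le> 2")
    case True
    have "card (set W \<inter> S) \<le> card S"
      by (intro card_mono) auto
    then show ?thesis
      using True card_S by simp
  next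
    case False
    then obtain j where j: "j \<in> {1..r}" "s j \<notin> set W" and three: "card (set W \<inter> C) = 3"
      using thick_dns_three_clique_vertices[OF assms] by auto
    have "card (set W \<inter> S) \<le> card (S - {s j})"
      using j by (intro card_mono) auto
    also have "\<dots> = r - 1"
      using j(1) card_S by simp
    finally show ?thesis
      using three two_le_r by simp
  qed
  finally show ?thesis .
qed

lemma thick_is_mdns:
  assumes "is_mdns H E TH"
  shows "is_mdns X E (TH @ map s [1..<r+1] @ [c 1, c 2])"
  unfolding is_mdns_def
proof (intro conjI allI impI)
  show "is_dns X E (TH @ map s [1..<r+1] @ [c 1, c 2])"
    using thick_is_dns assms unfolding is_mdns_def by blast
  fix W assume "is_dns X E W"
  then show "length W \<le> length (TH @ map s [1..<r+1] @ [c 1, c 2])"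
    using length_dns_le_mdns_H[OF _ assms] thick_card_set_dns_diff_H_le
    by (simp only: length_append length_map length_upt list.size) fastforce
qed

end

lemma spider_imp_spider_structure:
  assumes "spider V E r s c H"
  shows "spider_structure V E r s c H"
    and "spider_structure (c ` {1..r} \<union> s ` {1..r}) E r s c {}"
  by (rule spider_structure.intro; use assms in \<open>simp add: spider_def graph_def Un_commute\<close>)+

lemma thin_spider_is_mdns:
  assumes "thin_spider V E r s c H" "is_mdns H E TH"
  shows "is_mdns V E (TH @ map c [1..<r+1] @ map s [1..<r+1])"
    and "is_mdns (c ` {1..r} \<union> s ` {1..r}) E (map c [1..<r+1] @ map s [1..<r+1])"
proof -
  have thin: "thin_spider_structure_axioms E r s c"
    using assms(1) by (simp add: thin_spider_def thin_spider_structure_axioms_def)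
  have sp: "spider V E r s c H"
    using assms(1) by (simp add: thin_spider_def)
  interpret G: thin_spider_structure V E r s c H
    by (rule thin_spider_structure.intro[OF spider_imp_spider_structure(1)[OF sp] thin])
  interpret G_CS: thin_spider_structure "c ` {1..r} \<union> s ` {1..r}" E r s c "{}"
    by (rule thin_spider_structure.intro[OF spider_imp_spider_structure(2)[OF sp] thin])
  show "is_mdns V E (TH @ map c [1..<r+1] @ map s [1..<r+1])"
    using G.thin_is_mdns assms(2) .
  show "is_mdns (c ` {1..r} \<union> s ` {1..r}) E (map c [1..<r+1] @ map s [1..<r+1])"
    using G_CS.thin_is_mdns[OF is_mdns_empty] by (simp only: append_Nil)
qed

lemma thick_spider_is_mdns:
  assumes "thick_spider V E r s c H" "is_mdns H E TH"
  shows "is_mdns V E (TH @ map s [1..<r+1] @ [c 1, c 2])"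
    and "is_mdns (c ` {1..r} \<union> s ` {1..r}) E (map s [1..<r+1] @ [c 1, c 2])"
proof -
  have thick: "thick_spider_structure_axioms E r s c"
    using assms(1) by (simp add: thick_spider_def thick_spider_structure_axioms_def)
  have sp: "spider V E r s c H"
    using assms(1) by (simp add: thick_spider_def)
  interpret G: thick_spider_structure V E r s c H
    by (rule thick_spider_structure.intro[OF spider_imp_spider_structure(1)[OF sp] thick])
  interpret G_CS: thick_spider_structure "c ` {1..r} \<union> s ` {1..r}" E r s c "{}"
    by (rule thick_spider_structure.intro[OF spider_imp_spider_structure(2)[OF sp] thick])
  show "is_mdns V E (TH @ map s [1..<r+1] @ [c 1, c 2])"
    using G.thick_is_mdns assms(2) .
  show "is_mdns (c ` {1..r} \<union> s ` {1..r}) E (map s [1..<r+1] @ [c 1, c 2])"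
    using G_CS.thick_is_mdns[OF is_mdns_empty] by (simp only: append_Nil)
qed

lemma gamma_dns_eq_add:
  assumes "is_mdns V E (TH @ Q)" "is_mdns Y E Q" "is_mdns H E TH"
  shows "gamma_dns V E = gamma_dns Y E + gamma_dns H E"
  using is_mdns_imp_gamma_dns[OF assms(1)] is_mdns_imp_gamma_dns[OF assms(2)]
    is_mdns_imp_gamma_dns[OF assms(3)] by simp

theorem proposition8:
  fixes V :: "'a set" and E :: "'a \<Rightarrow> 'a \<Rightarrow> bool" and r :: nat
    and s c :: "nat \<Rightarrow> 'a" and H :: "'a set" and TH :: "'a list"
  assumes "(thin_spider V E r s c H \<and> r \<ge> 2) \<or> (thick_spider V E r s c H \<and> r \<ge> 3)"
    and "is_mdns H E TH"
  shows "gamma_dns V E = gamma_dns (c ` {1..r} \<union> s ` {1..r}) E + gamma_dns H E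
    \<and> (thin_spider V E r s c H \<longrightarrow>
         is_mdns V E (TH @ map c [1..<r+1] @ map s [1..<r+1]))
    \<and> (thick_spider V E r s c H \<longrightarrow>
         is_mdns V E (TH @ map s [1..<r+1] @ [c 1, c 2]))"
proof (intro conjI impI)
  show "gamma_dns V E = gamma_dns (c ` {1..r} \<union> s ` {1..r}) E + gamma_dns H E"
    using assms(1)
  proof (elim disjE conjE)
    assume "thin_spider V E r s c H"
    from thin_spider_is_mdns[OF this assms(2)] show ?thesis
      by (rule gamma_dns_eq_add[OF _ _ assms(2)])
  next
    assume "thick_spider V E r s c H"
    from thick_spider_is_mdns[OF this assms(2)] show ?thesis
      by (rule gamma_dns_eq_add[OF _ _ assms(2)])
  qed
  show "is_mdns V E (TH @ map c [1..<r+1] @ map s [1..<r+1])" if "thin_spider V E r s c H"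
    using thin_spider_is_mdns(1)[OF that assms(2)] .
  show "is_mdns V E (TH @ map s [1..<r+1] @ [c 1, c 2])" if "thick_spider V E r s c H"
    using thick_spider_is_mdns(1)[OF that assms(2)] .
qed

end
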